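(* Let $f(\mathbf z)$ be a convenient non-degenerate holomorphic function near the origin of $\mathbb C^n$, let $a>b\ge0$ be integers, and $g(\mathbf w,\bar{\mathbf w})=f(w_1^a\bar w_1^b,\dots,w_n^a\bar w_n^b)$. Let $\mathbf w\ne0$ be a point (in the domain) with $g(\mathbf w,\bar{\mathbf w})\ne0$. Let $\pi:\mathbb C^n\to\mathbb C^n$ be the hermitian orthogonal projection onto $\{\mathbf v:(\mathbf v,\mathbf w)=0\}$, and set $\mathbf v_{11}=\pi\big(g\,\overline{\nabla_\partial g}\big)$, $\mathbf v_{21}=\pi\big(\bar g\,\nabla_{\bar\partial}g\big)$ (evaluated at $\mathbf w$). Then $\|\mathbf v_{11}\|^2-\|\mathbf v_{21}\|^2\ge0$, and equality holds if and only if $\overline{\nabla_\partial g}(\mathbf w,\bar{\mathbf w})=\lambda_1\mathbf w$ and $\nabla_{\bar\partial}g(\mathbf w,\bar{\mathbf w})=\lambda_2\mathbf w$ for some $\lambda_1,\lambda_2\in\mathbb C$. In this case $\nabla\theta(\mathbf w)=\lambda R(\mathbf w)$ for some $\lambda\in\mathbb C$.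
   Context: Hermitian product $(\mathbf u,\mathbf v)=\sum u_j\bar v_j$. $\nabla_\partial g=(g_{w_1},\dots,g_{w_n})$, $\nabla_{\bar\partial}g=(g_{\bar w_1},\dots,g_{\bar w_n})$ with $g_{w_j}=\partial g/\partial w_j$, $g_{\bar w_j}=\partial g/\partial\bar w_j$; the bar on a vector means componentwise conjugation. $\theta=\arg g$ on $\{g\ne0\}$ and its hermitian gradient is $\nabla\theta=i\big(\overline{g_{w_1}}/\bar g-g_{\bar w_1}/g,\dots,\overline{g_{w_n}}/\bar g-g_{\bar w_n}/g\big)$. $R(\mathbf w)=i\mathbf w/(2\rho(\mathbf w))$, $\rho(\mathbf w)=\sum|w_j|^2$ (Reeb vector field of the canonical contact form on spheres). Convenient/non-degenerate: Newton boundary of $f$ meets every coordinate axis and each face function $f_P$ has no critical point on $f_P^{-1}(0)\cap(\mathbb C^* )^n$. *)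

theory Defs
  imports "HOL-Analysis.Analysis"
begin

definition monom :: "nat^'n \<Rightarrow> complex^'n \<Rightarrow> complex" where
  "monom \<nu> z = (\<Prod>j\<in>UNIV. (z$j) ^ (\<nu>$j))"

definition expvec :: "nat^'n \<Rightarrow> real^'n" where
  "expvec \<nu> = (\<chi> j. real (\<nu>$j))"

definition newton_polyhedron :: "(nat^'n \<Rightarrow> complex) \<Rightarrow> (real^'n) set" where
  "newton_polyhedron c =
     convex hull (\<Union>\<nu>\<in>{\<nu>. c \<nu> \<noteq> 0}. (\<lambda>x. expvec \<nu> + x) ` {x. \<forall>j. 0 \<le> x$j})"

definition compact_faces :: "(nat^'n \<Rightarrow> complex) \<Rightarrow> (real^'n) set set" where
  "compact_faces c = {F. F face_of newton_polyhedron c \<and> compact F \<and> F \<noteq> {}}"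

definition newton_boundary :: "(nat^'n \<Rightarrow> complex) \<Rightarrow> (real^'n) set" where
  "newton_boundary c = \<Union> (compact_faces c)"

definition convenient :: "(nat^'n \<Rightarrow> complex) \<Rightarrow> bool" where
  "convenient c \<longleftrightarrow> (\<forall>j. newton_boundary c \<inter> range (\<lambda>t. t *\<^sub>R axis j (1::real)) \<noteq> {})"

definition face_function :: "(nat^'n \<Rightarrow> complex) \<Rightarrow> (real^'n) set \<Rightarrow> complex^'n \<Rightarrow> complex" where
  "face_function c F z = (\<Sum>\<nu>\<in>{\<nu>. c \<nu> \<noteq> 0 \<and> expvec \<nu> \<in> F}. c \<nu> * monom \<nu> z)"

definition nondegenerate :: "(nat^'n \<Rightarrow> complex) \<Rightarrow> bool" where
  "nondegenerate c \<longleftrightarrow> (\<forall>F\<in>compact_faces c.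
      \<not> (\<exists>z. (\<forall>j. z$j \<noteq> 0) \<and> face_function c F z = 0 \<and>
             (face_function c F has_derivative (\<lambda>h. 0)) (at z)))"

definition wirt_d :: "(complex^'n \<Rightarrow> complex) \<Rightarrow> complex^'n \<Rightarrow> 'n \<Rightarrow> complex" where
  "wirt_d g w j = (frechet_derivative g (at w) (axis j 1) - \<i> * frechet_derivative g (at w) (axis j \<i>)) / 2"

definition wirt_dbar :: "(complex^'n \<Rightarrow> complex) \<Rightarrow> complex^'n \<Rightarrow> 'n \<Rightarrow> complex" where
  "wirt_dbar g w j = (frechet_derivative g (at w) (axis j 1) + \<i> * frechet_derivative g (at w) (axis j \<i>)) / 2"

definition grad_d :: "(complex^'n \<Rightarrow> complex) \<Rightarrow> complex^'n \<Rightarrow> complex^'n" where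
  "grad_d g w = (\<chi> j. wirt_d g w j)"

definition grad_dbar :: "(complex^'n \<Rightarrow> complex) \<Rightarrow> complex^'n \<Rightarrow> complex^'n" where
  "grad_dbar g w = (\<chi> j. wirt_dbar g w j)"

definition vcnj :: "complex^'n \<Rightarrow> complex^'n" where
  "vcnj v = (\<chi> j. cnj (v$j))"

definition herm :: "complex^'n \<Rightarrow> complex^'n \<Rightarrow> complex" where
  "herm u v = (\<Sum>j\<in>UNIV. u$j * cnj (v$j))"

definition proj_perp :: "complex^'n \<Rightarrow> complex^'n \<Rightarrow> complex^'n" where
  "proj_perp w x = x - (herm x w / herm w w) *s w"

definition rho :: "complex^'n \<Rightarrow> real" where
  "rho w = (\<Sum>j\<in>UNIV. (cmod (w$j))^2)"

definition reeb :: "complex^'n \<Rightarrow> complex^'n" where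
  "reeb w = (\<i> / (2 * complex_of_real (rho w))) *s w"

text \<open>Hermitian gradient of theta = arg g.\<close>
definition grad_theta :: "(complex^'n \<Rightarrow> complex) \<Rightarrow> complex^'n \<Rightarrow> complex^'n" where
  "grad_theta g w = (\<chi> j. \<i> * (cnj (wirt_d g w j) / cnj (g w) - wirt_dbar g w j / g w))"

end

theory Submission
  imports Defs
begin

text \<open>Put phi(w)_j = w_j^a conj(w_j)^b, so that g = f o phi with f holomorphic, and let D_j be
  the partial derivatives of f at phi(w). By the chain rule the Wirtinger derivatives of g are
  D_j a w_j^(a-1) conj(w_j)^b and D_j b w_j^a conj(w_j)^(b-1). Hence u = conj(grad_d g) and
  v = grad_dbar g satisfy |v_j| = (b/a) |u_j| and v_j conj(w_j) = (b/a) conj(u_j) w_j, so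
  ||v|| = (b/a) ||u|| and |(v,w)| = (b/a) |(u,w)|, which gives ||pi v||^2 = (b/a)^2 ||pi u||^2.
  The difference in question is therefore |g|^2 (1 - (b/a)^2) ||pi u||^2: it is nonnegative and
  vanishes iff pi u = pi v = 0, i.e. iff both gradients are multiples of w, and then grad theta
  is a multiple of w, hence of R(w). Only the holomorphy of f at phi(w) is used.\<close>

lemma herm_diff_left: "herm (x - y) z = herm x z - herm y z"
  unfolding herm_def by (simp add: algebra_simps sum_subtractf)

lemma herm_diff_right: "herm z (x - y) = herm z x - herm z y"
  unfolding herm_def by (simp add: algebra_simps sum_subtractf)

lemma herm_scale_left: "herm (t *s x) z = t * herm x z"
  unfolding herm_def by (simp add: sum_distrib_left ac_simps)

lemma herm_scale_right: "herm z (t *s x) = cnj t * herm z x"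
  unfolding herm_def by (simp add: sum_distrib_left ac_simps)

lemma herm_commute: "herm y x = cnj (herm x y)"
  unfolding herm_def by (simp add: ac_simps)

lemma norm_power2_vec: "(norm (x::complex^'n))\<^sup>2 = (\<Sum>j\<in>UNIV. (cmod (x$j))\<^sup>2)"
  unfolding norm_vec_def L2_set_def by (simp add: sum_nonneg)

lemma herm_self: "herm x x = complex_of_real ((norm x)\<^sup>2)"
  unfolding norm_power2_vec herm_def of_real_sum by (simp only: complex_norm_square)

lemma rho_eq_norm_power2: "rho w = (norm w)\<^sup>2"
  unfolding rho_def norm_power2_vec ..

lemma norm_power2_scale: "(norm (t *s y))\<^sup>2 = (cmod t)\<^sup>2 * (norm y)\<^sup>2"
  unfolding norm_power2_vec by (simp add: norm_mult power_mult_distrib sum_distrib_left)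

lemma proj_perp_scale: "proj_perp w (t *s y) = t *s proj_perp w y"
  unfolding proj_perp_def herm_scale_left by simp

lemma norm_power2_proj_perp:
  assumes "w \<noteq> 0"
  shows "(norm (proj_perp w x))\<^sup>2 = (norm x)\<^sup>2 - (cmod (herm x w))\<^sup>2 / (norm w)\<^sup>2"
proof -
  define h where "h = herm x w"
  define t where "t = h / herm w w"
  have "complex_of_real ((norm (proj_perp w x))\<^sup>2) = herm (x - t *s w) (x - t *s w)"
    unfolding herm_self proj_perp_def t_def h_def ..
  also have "\<dots> = herm x x - cnj t * h - t * cnj h + t * cnj t * herm w w"
    by (simp add: herm_diff_left herm_diff_right herm_scale_left herm_scale_right h_def
        herm_commute[of w x] algebra_simps)
  also have "\<dots> = complex_of_real ((norm x)\<^sup>2 - (cmod h)\<^sup>2 / (norm w)\<^sup>2)"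
  proof -
    have "h * cnj h = complex_of_real (cmod h) * complex_of_real (cmod h)"
      using complex_norm_square[of h] by (simp add: power2_eq_square)
    then show ?thesis using assms unfolding t_def herm_self
      by (simp add: field_simps power2_eq_square)
  qed
  finally show ?thesis unfolding h_def of_real_eq_iff .
qed

lemma proj_perp_eq_0_iff:
  assumes "w \<noteq> 0"
  shows "proj_perp w y = 0 \<longleftrightarrow> (\<exists>l. y = l *s w)"
proof
  assume "proj_perp w y = 0"
  then show "\<exists>l. y = l *s w" unfolding proj_perp_def by (metis eq_iff_diff_eq_0)
next
  assume "\<exists>l. y = l *s w"
  moreover have "herm w w \<noteq> 0" using assms by (simp add: herm_self)
  ultimately show "proj_perp w y = 0" unfolding proj_perp_def by (auto simp: herm_scale_left)
qed

lemma norm_power2_proj_perp_proportional: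
  assumes "w \<noteq> 0"
    and norms: "\<And>j. cmod (v$j) = k * cmod (u$j)"
    and phases: "\<And>j. v$j * cnj (w$j) = of_real k * (cnj (u$j) * w$j)"
  shows "(norm (proj_perp w v))\<^sup>2 = k\<^sup>2 * (norm (proj_perp w u))\<^sup>2"
proof -
  have "(norm v)\<^sup>2 = k\<^sup>2 * (norm u)\<^sup>2"
    unfolding norm_power2_vec sum_distrib_left norms by (simp add: power_mult_distrib)
  moreover have "herm v w = of_real k * cnj (herm u w)"
    unfolding herm_def cnj_sum sum_distrib_left phases by (simp add: ac_simps)
  then have "(cmod (herm v w))\<^sup>2 = k\<^sup>2 * (cmod (herm u w))\<^sup>2"
    by (simp add: norm_mult power_mult_distrib)
  ultimately show ?thesis
    unfolding norm_power2_proj_perp[OF assms(1)] by (simp add: right_diff_distrib)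
qed

lemma grad_theta_eq_scale_reeb:
  assumes "w \<noteq> 0" "g w \<noteq> 0"
    and "vcnj (grad_d g w) = l1 *s w" "grad_dbar g w = l2 *s w"
  shows "grad_theta g w = ((l1 / cnj (g w) - l2 / g w) * (2 * of_real (rho w))) *s reeb w"
proof -
  have "cnj (wirt_d g w j) = l1 * w$j" "wirt_dbar g w j = l2 * w$j" for j
    using assms(3,4) by (simp_all add: vcnj_def grad_d_def grad_dbar_def vec_eq_iff)
  moreover have "rho w \<noteq> 0" using assms(1) by (simp add: rho_eq_norm_power2)
  ultimately show ?thesis
    using assms(2) unfolding grad_theta_def reeb_def by (simp add: vec_eq_iff field_simps)
qed

definition monom_partial :: "nat^'n \<Rightarrow> complex^'n \<Rightarrow> 'n \<Rightarrow> complex" where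
  "monom_partial \<nu> x j = of_nat (\<nu>$j) * x$j ^ (\<nu>$j - 1) * (\<Prod>k\<in>UNIV-{j}. x$k ^ (\<nu>$k))"

lemma has_derivative_monom:
  fixes x :: "complex^'n"
  shows "(monom \<nu> has_derivative (\<lambda>h. \<Sum>j\<in>UNIV. h$j * monom_partial \<nu> x j)) (at x within S)"
proof -
  have "((\<lambda>x::complex^'n. \<Prod>j\<in>UNIV. (x$j)^(\<nu>$j)) has_derivative
          (\<lambda>h. \<Sum>j\<in>UNIV. (of_nat (\<nu>$j) * h$j * x$j^(\<nu>$j - 1)) * (\<Prod>k\<in>UNIV-{j}. x$k^(\<nu>$k))))
        (at x within S)"
    by (rule derivative_eq_intros derivative_eq_intros(1)
        bounded_linear_imp_has_derivative[OF bounded_linear_vec_nth] refl | simp)+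
  then show ?thesis
    unfolding monom_def[abs_def] monom_partial_def by (simp add: ac_simps)
qed

lemma mult_power_pred_le_power_diff:
  fixes r R :: real
  assumes "0 \<le> r" "r \<le> R"
  shows "real n * r^(n-1) * (R - r) \<le> R^n - r^n"
proof (induction n)
  case 0 then show ?case by simp
next
  case (Suc n)
  have "real (Suc n) * r^n * (R - r) = r * (real n * r^(n-1) * (R - r)) + r^n * (R - r)"
    by (cases n) (auto simp: algebra_simps)
  also have "\<dots> \<le> r * (R^n - r^n) + r^n * (R - r)"
    using Suc assms by (intro add_mono mult_left_mono) auto
  also have "\<dots> \<le> R^Suc n - r^Suc n"
  proof -
    have "r^n \<le> R^n" using assms by (intro power_mono)
    then have "0 \<le> (R - r) * (R^n - r^n)" using assms by auto
    then show ?thesis by (simp add: algebra_simps)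
  qed
  finally show ?case by simp
qed

lemma norm_monom_partial_le:
  assumes R: "\<And>i. cmod (x$i) + d \<le> R i" and "0 < d"
  shows "cmod (monom_partial \<nu> x j) * d \<le> (\<Prod>i\<in>UNIV. R i ^ (\<nu>$i))"
proof -
  have xR: "cmod (x$i) \<le> R i" for i using R[of i] \<open>0 < d\<close> by linarith
  then have R0: "0 \<le> R i" for i by (rule order_trans[OF norm_ge_zero])
  have "real (\<nu>$j) * cmod (x$j) ^ (\<nu>$j - 1) * d \<le> R j ^ (\<nu>$j)"
    using mult_power_pred_le_power_diff[of "cmod (x$j)" "R j" "\<nu>$j"] R[of j] \<open>0 < d\<close>
    by (smt (verit, best) mult_left_mono mult_nonneg_nonneg norm_ge_zero of_nat_0_le_iff
        zero_le_power)
  moreover have "(\<Prod>k\<in>UNIV-{j}. cmod (x$k) ^ (\<nu>$k)) \<le> (\<Prod>k\<in>UNIV-{j}. R k ^ (\<nu>$k))"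
    using xR by (intro prod_mono conjI power_mono) auto
  ultimately have "real (\<nu>$j) * cmod (x$j) ^ (\<nu>$j - 1) * d * (\<Prod>k\<in>UNIV-{j}. cmod (x$k) ^ (\<nu>$k))
      \<le> R j ^ (\<nu>$j) * (\<Prod>k\<in>UNIV-{j}. R k ^ (\<nu>$k))"
    using R0 by (intro mult_mono) (auto intro: prod_nonneg)
  then show ?thesis
    by (simp add: monom_partial_def norm_mult norm_power prod_norm[symmetric]
        prod.remove[of UNIV j] ac_simps)
qed

lemma norm_monom_derivative_le:
  fixes x h :: "complex^'n"
  assumes "\<And>i. cmod (x$i) + d \<le> R i" and "0 < d"
  shows "cmod (\<Sum>j\<in>UNIV. h$j * monom_partial \<nu> x j)
           \<le> real CARD('n) / d * (\<Prod>i\<in>UNIV. R i ^ (\<nu>$i)) * norm h"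
proof -
  have "cmod (\<Sum>j\<in>UNIV. h$j * monom_partial \<nu> x j) \<le> (\<Sum>j\<in>UNIV. cmod (h$j * monom_partial \<nu> x j))"
    by (rule norm_sum)
  also have "\<dots> \<le> (\<Sum>j\<in>(UNIV::'n set). norm h * ((\<Prod>i\<in>UNIV. R i ^ (\<nu>$i)) / d))"
  proof (rule sum_mono)
    fix j
    have "cmod (monom_partial \<nu> x j) \<le> (\<Prod>i\<in>UNIV. R i ^ (\<nu>$i)) / d"
      using norm_monom_partial_le[OF assms] assms(2) by (simp add: pos_le_divide_eq)
    then show "cmod (h$j * monom_partial \<nu> x j) \<le> norm h * ((\<Prod>i\<in>UNIV. R i ^ (\<nu>$i)) / d)"
      unfolding norm_mult by (intro mult_mono Finite_Cartesian_Product.norm_nth_le) auto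
  qed
  finally show ?thesis by (simp add: ac_simps)
qed

lemma exists_moduli_shift:
  fixes z :: "complex^'n"
  assumes "0 \<le> s"
  obtains z' where "dist z z' \<le> real CARD('n) * s" "\<And>j. cmod (z'$j) = cmod (z$j) + s"
proof
  define z' where "z' = (\<chi> j. z$j + of_real s * (if z$j = 0 then 1 else sgn (z$j)))"
  show "cmod (z'$j) = cmod (z$j) + s" for j
  proof (cases "z$j = 0")
    case False
    then have "z'$j = z$j * of_real (1 + s / cmod (z$j))"
      by (simp add: z'_def sgn_div_norm scaleR_conv_of_real field_simps)
    moreover have "0 \<le> 1 + s / cmod (z$j)" using assms by simp
    ultimately show ?thesis
      using False by (simp only: norm_mult norm_of_real abs_of_nonneg) (simp add: distrib_left)
  qed (use assms in \<open>simp add: z'_def\<close>)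
  have "dist z z' \<le> (\<Sum>j\<in>UNIV. cmod ((z - z')$j))"
    unfolding dist_norm norm_vec_def by (rule L2_set_le_sum) simp
  also have "\<dots> = real CARD('n) * s"
  proof -
    have "cmod ((z - z')$j) = s" for j
      using assms by (cases "z$j = 0") (simp_all add: z'_def norm_mult norm_sgn)
    then show ?thesis by simp
  qed
  finally show "dist z z' \<le> real CARD('n) * s" .
qed

lemma dominated_derivative_series_uniform:
  fixes f' :: "nat \<Rightarrow> 'x \<Rightarrow> 'a::real_normed_vector \<Rightarrow> 'b::banach"
  assumes bound: "\<And>n y h. y \<in> S \<Longrightarrow> norm (f' n y h) \<le> B n * norm h"
    and "summable B" and "0 < e"
  shows "\<forall>\<^sub>F n in sequentially. \<forall>y\<in>S. \<forall>h.
           norm ((\<Sum>i<n. f' i y h) - (\<Sum>i. f' i y h)) \<le> e * norm h"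
proof -
  have summable_tail: "summable (\<lambda>i. norm (f' (i + m) y h))" if "y \<in> S" for y h m
  proof (rule summable_comparison_test')
    show "summable (\<lambda>i. B (i + m) * norm h)"
      using \<open>summable B\<close> by (intro summable_mult2) simp
    show "norm (norm (f' (i + m) y h)) \<le> B (i + m) * norm h" for i
      using bound[OF that] by simp
  qed
  obtain N where N: "\<And>n. n \<ge> N \<Longrightarrow> norm (\<Sum>i. B (i + n)) < e"
    using suminf_exist_split[OF \<open>0 < e\<close> \<open>summable B\<close>] by blast
  show ?thesis
    unfolding eventually_sequentially
  proof (intro exI allI impI ballI)
    fix n y h assume "N \<le> n" "y \<in> S"
    have "summable (\<lambda>i. f' i y h)"
      using summable_tail[OF \<open>y \<in> S\<close>, where m=0 and h=h] by (simp add: summable_norm_cancel)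
    then have "(\<Sum>i. f' (i + n) y h) = (\<Sum>i. f' i y h) - (\<Sum>i<n. f' i y h)"
      by (rule suminf_minus_initial_segment)
    then have "norm ((\<Sum>i<n. f' i y h) - (\<Sum>i. f' i y h)) = norm (\<Sum>i. f' (i + n) y h)"
      by (simp add: norm_minus_commute)
    also have "\<dots> \<le> (\<Sum>i. norm (f' (i + n) y h))"
      by (rule summable_norm[OF summable_tail[OF \<open>y \<in> S\<close>]])
    also have "\<dots> \<le> (\<Sum>i. B (i + n) * norm h)"
      using bound[OF \<open>y \<in> S\<close>] summable_tail[OF \<open>y \<in> S\<close>] \<open>summable B\<close>
      by (intro suminf_le summable_mult2) simp_all
    also have "\<dots> = (\<Sum>i. B (i + n)) * norm h"
      using \<open>summable B\<close> by (intro suminf_mult2[symmetric]) simp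
    also have "\<dots> \<le> e * norm h"
      using N[OF \<open>N \<le> n\<close>] by (intro mult_right_mono) auto
    finally show "norm ((\<Sum>i<n. f' i y h) - (\<Sum>i. f' i y h)) \<le> e * norm h" .
  qed
qed

lemma has_derivative_series_Mtest:
  fixes f :: "nat \<Rightarrow> 'a::real_normed_vector \<Rightarrow> 'b::banach"
  assumes "convex S" "open S" "x \<in> S"
    and deriv: "\<And>n x. x \<in> S \<Longrightarrow> (f n has_derivative f' n x) (at x)"
    and bound: "\<And>n x h. x \<in> S \<Longrightarrow> norm (f' n x h) \<le> B n * norm h"
    and "summable B"
    and sums: "\<And>x. x \<in> S \<Longrightarrow> (\<lambda>n. f n x) sums F x"
  shows "(F has_derivative (\<lambda>h. \<Sum>n. f' n x h)) (at x)"
proof -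
  obtain G where G: "\<And>y. y \<in> S \<Longrightarrow> (\<lambda>n. f n y) sums G y \<and>
                          (G has_derivative (\<lambda>h. \<Sum>n. f' n y h)) (at y within S)"
    using has_derivative_series[of S f f' "\<lambda>y h. \<Sum>n. f' n y h", OF \<open>convex S\<close> _
        dominated_derivative_series_uniform[OF bound \<open>summable B\<close>] \<open>x \<in> S\<close> sums[OF \<open>x \<in> S\<close>]]
      deriv has_derivative_at_withinI by blast
  have "(G has_derivative (\<lambda>h. \<Sum>n. f' n x h)) (at x)"
    using G[OF \<open>x \<in> S\<close>] at_within_open[OF \<open>x \<in> S\<close> \<open>open S\<close>] by simp
  then show ?thesis
    by (rule has_derivative_transform_within_open[OF _ \<open>open S\<close> \<open>x \<in> S\<close>])
       (metis G sums sums_unique2)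
qed

(* Enumerating the multi-indices lets the nat-indexed theory of series (termwise
   differentiation) apply to power series summed over nat^'n. *)
definition natvec_enum :: "nat \<Rightarrow> nat^'n" where
  "natvec_enum = from_nat_into UNIV"

lemma bij_natvec_enum: "bij_betw natvec_enum UNIV UNIV"
proof -
  have "inj (vec :: nat \<Rightarrow> nat^'n)" by (auto simp: inj_def vec_eq_iff)
  then have "infinite (UNIV :: (nat^'n) set)"
    using range_inj_infinite infinite_super[OF subset_UNIV] by blast
  then show ?thesis
    unfolding natvec_enum_def by (intro bij_betw_from_nat_into) auto
qed

lemma has_sum_natvec_imp_sums:
  assumes "(\<phi> has_sum a) (UNIV :: (nat^'n) set)"
  shows "(\<lambda>k. \<phi> (natvec_enum k)) sums a"
  using assms has_sum_reindex_bij_betw[OF bij_natvec_enum] by (blast intro: has_sum_imp_sums)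

lemma norm_monom: "cmod (monom \<nu> z) = (\<Prod>i\<in>UNIV. cmod (z$i) ^ (\<nu>$i))"
  unfolding monom_def by (simp add: prod_norm[symmetric] norm_power)

lemma summable_on_monom_partial:
  fixes c :: "nat^'n \<Rightarrow> complex"
  assumes "(\<lambda>\<nu>. cmod (c \<nu>) * (\<Prod>i\<in>UNIV. R i ^ (\<nu>$i))) summable_on UNIV"
    and "\<And>i. cmod (x$i) + d \<le> R i" and "0 < d"
  shows "(\<lambda>\<nu>. c \<nu> * monom_partial \<nu> x j) summable_on UNIV"
  unfolding summable_on_iff_abs_summable_on_complex
proof (rule Infinite_Sum.abs_summable_on_comparison_test)
  have R: "0 \<le> R i" for i using assms(2)[of i] \<open>0 < d\<close> norm_ge_zero[of "x$i"] by linarith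
  then show "(\<lambda>\<nu>. norm (cmod (c \<nu>) * (\<Prod>i\<in>UNIV. R i ^ (\<nu>$i)) / d)) summable_on UNIV"
    using summable_on_cmult_left[OF assms(1), of "inverse d"] \<open>0 < d\<close>
    by (simp add: divide_inverse prod_nonneg abs_mult)
  show "norm (c \<nu> * monom_partial \<nu> x j) \<le> norm (cmod (c \<nu>) * (\<Prod>i\<in>UNIV. R i ^ (\<nu>$i)) / d)"
    for \<nu>
    using mult_left_mono[OF norm_monom_partial_le[OF assms(2,3)], of "cmod (c \<nu>)"] \<open>0 < d\<close> R
    by (simp add: norm_mult pos_le_divide_eq prod_nonneg abs_mult ac_simps)
qed

lemma power_series_abs_summable_near:
  fixes c :: "nat^'n \<Rightarrow> complex" and f :: "complex^'n \<Rightarrow> complex"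
  assumes "open U" and f: "\<forall>z\<in>U. ((\<lambda>\<nu>. c \<nu> * monom \<nu> z) has_sum f z) UNIV" and "z \<in> U"
  obtains s where "0 < s" "ball z s \<subseteq> U"
    and "(\<lambda>\<nu>. cmod (c \<nu>) * (\<Prod>i\<in>UNIV. (cmod (z$i) + 2 * s) ^ (\<nu>$i))) summable_on UNIV"
proof -
  obtain e where "0 < e" and ball_U: "ball z e \<subseteq> U"
    using \<open>open U\<close> \<open>z \<in> U\<close> open_contains_ball by blast
  define s where "s = e / (2 * real CARD('n) + 2)"
  have "0 < s" and s_le: "real CARD('n) * (2 * s) < e" "s < e"
    using \<open>0 < e\<close> by (auto simp: s_def field_simps intro: add_pos_nonneg)
  \<comment> \<open>Absolute convergence at a point with larger moduli dominates the series near z.\<close>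
  obtain z' where "dist z z' \<le> real CARD('n) * (2 * s)"
    and z': "\<And>j. cmod (z'$j) = cmod (z$j) + 2 * s"
    using exists_moduli_shift[of "2 * s" z] \<open>0 < s\<close> by auto
  then have "z' \<in> U" using ball_U s_le by auto
  then have "(\<lambda>\<nu>. c \<nu> * monom \<nu> z') summable_on UNIV"
    using f by (auto simp: summable_on_def)
  then have "(\<lambda>\<nu>. cmod (c \<nu>) * (\<Prod>i\<in>UNIV. (cmod (z$i) + 2 * s) ^ (\<nu>$i))) summable_on UNIV"
    unfolding summable_on_iff_abs_summable_on_complex by (simp add: norm_mult norm_monom z')
  moreover have "ball z s \<subseteq> U"
    using ball_U s_le subset_ball[of s e z] by simp
  ultimately show ?thesis using \<open>0 < s\<close> that by blast
qed

lemma power_series_has_derivative: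
  fixes c :: "nat^'n \<Rightarrow> complex" and f :: "complex^'n \<Rightarrow> complex"
  assumes "open U" and f: "\<forall>z\<in>U. ((\<lambda>\<nu>. c \<nu> * monom \<nu> z) has_sum f z) UNIV" and "z \<in> U"
  shows "(f has_derivative (\<lambda>h. \<Sum>j\<in>UNIV. h$j * (\<Sum>\<^sub>\<infinity>\<nu>. c \<nu> * monom_partial \<nu> z j))) (at z)"
proof -
  obtain s where "0 < s" and ball_U: "ball z s \<subseteq> U"
    and dominating: "(\<lambda>\<nu>. cmod (c \<nu>) * (\<Prod>i\<in>UNIV. (cmod (z$i) + 2 * s) ^ (\<nu>$i))) summable_on UNIV"
    using power_series_abs_summable_near[OF assms] .
  define R where "R i = cmod (z$i) + 2 * s" for i
  define M where "M \<nu> = cmod (c \<nu>) * (\<Prod>i\<in>UNIV. R i ^ (\<nu>$i))" for \<nu>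
  have "summable (\<lambda>k. M (natvec_enum k))"
    using sums_summable[OF has_sum_natvec_imp_sums[OF has_sum_infsum[OF dominating]]]
    by (simp add: M_def R_def)
  have near: "cmod (x$i) + s \<le> R i" if "x \<in> ball z s" for x i
  proof -
    have "cmod (x$i) \<le> cmod (z$i) + cmod ((x - z)$i)"
      using norm_triangle_ineq[of "z$i" "(x - z)$i"] by simp
    also have "cmod ((x - z)$i) \<le> s"
      using that Finite_Cartesian_Product.norm_nth_le[of "x - z" i]
      by (simp add: dist_norm norm_minus_commute)
    finally show ?thesis by (simp add: R_def)
  qed
  define F' :: "nat \<Rightarrow> complex^'n \<Rightarrow> complex^'n \<Rightarrow> complex" where
    "F' k x h = c (natvec_enum k) * (\<Sum>j\<in>UNIV. h$j * monom_partial (natvec_enum k) x j)" for k x h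
  have deriv: "(f has_derivative (\<lambda>h. \<Sum>k. F' k z h)) (at z)"
  proof (rule has_derivative_series_Mtest
      [where S="ball z s" and B="\<lambda>k. real CARD('n) / s * M (natvec_enum k)"])
    show "((\<lambda>x. c (natvec_enum k) * monom (natvec_enum k) x) has_derivative F' k x) (at x)" for k x
      unfolding F'_def[abs_def] by (intro has_derivative_mult_right has_derivative_monom)
    show "norm (F' k x h) \<le> real CARD('n) / s * M (natvec_enum k) * norm h" if "x \<in> ball z s" for k x h
      using mult_left_mono[OF norm_monom_derivative_le[OF near[OF that]], of "cmod (c (natvec_enum k))"]
        \<open>0 < s\<close>
      by (simp add: F'_def M_def norm_mult ac_simps)
    show "(\<lambda>k. c (natvec_enum k) * monom (natvec_enum k) x) sums f x" if "x \<in> ball z s" for x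
      using f ball_U that by (intro has_sum_natvec_imp_sums) blast
  qed (use \<open>0 < s\<close> \<open>summable (\<lambda>k. M (natvec_enum k))\<close> in \<open>simp_all add: summable_mult\<close>)
  have "(\<lambda>k. F' k z h) sums (\<Sum>j\<in>UNIV. h$j * (\<Sum>\<^sub>\<infinity>\<nu>. c \<nu> * monom_partial \<nu> z j))" for h
  proof -
    have "(\<lambda>k. h$j * (c (natvec_enum k) * monom_partial (natvec_enum k) z j))
            sums (h$j * (\<Sum>\<^sub>\<infinity>\<nu>. c \<nu> * monom_partial \<nu> z j))" for j
      using summable_on_monom_partial[of c R z s j] dominating near[of z] \<open>0 < s\<close>
      by (intro sums_mult has_sum_natvec_imp_sums has_sum_infsum) (simp add: R_def)
    then show ?thesis
      unfolding F'_def sum_distrib_left by (intro sums_sum) (simp add: ac_simps)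
  qed
  then have "(\<lambda>h. \<Sum>k. F' k z h) = (\<lambda>h. \<Sum>j\<in>UNIV. h$j * (\<Sum>\<^sub>\<infinity>\<nu>. c \<nu> * monom_partial \<nu> z j))"
    by (intro ext sums_unique[symmetric])
  then show ?thesis using deriv by simp
qed

lemma has_derivative_vec_lambda:
  fixes f :: "'a::real_normed_vector \<Rightarrow> 'b::euclidean_space^'n"
  assumes "\<And>i. ((\<lambda>x. f x $ i) has_derivative (\<lambda>h. f' h $ i)) (at x within S)"
  shows "(f has_derivative f') (at x within S)"
proof (rule has_derivative_componentwise_within[THEN iffD2], rule ballI)
  fix v :: "'b^'n" assume "v \<in> Basis"
  then obtain i u where u: "u \<in> Basis" "v = axis i u" by (auto simp: Basis_vec_def)
  have "((\<lambda>x. f x $ i \<bullet> u) has_derivative (\<lambda>h. f' h $ i \<bullet> u)) (at x within S)"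
    by (rule has_derivative_inner_left[OF assms])
  then show "((\<lambda>x. f x \<bullet> v) has_derivative (\<lambda>h. f' h \<bullet> v)) (at x within S)"
    unfolding u by (simp add: inner_axis)
qed

lemma has_derivative_power_cnj_power:
  fixes w :: "complex^'n"
  shows "((\<lambda>w. \<chi> j. w$j ^ a * cnj (w$j) ^ b) has_derivative
          (\<lambda>h. \<chi> j. of_nat a * h$j * w$j ^ (a - 1) * cnj (w$j) ^ b
                     + of_nat b * cnj (h$j) * w$j ^ a * cnj (w$j) ^ (b - 1))) (at w)"
proof (rule has_derivative_vec_lambda)
  fix j
  have nth: "((\<lambda>x. x$j) has_derivative (\<lambda>h. h$j)) (at w)"
    by (rule bounded_linear_imp_has_derivative[OF bounded_linear_vec_nth])
  have cnj_nth: "((\<lambda>x. cnj (x$j)) has_derivative (\<lambda>h. cnj (h$j))) (at w)"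
    by (rule bounded_linear.has_derivative[OF bounded_linear_cnj nth])
  show "((\<lambda>x. (\<chi> j. x$j ^ a * cnj (x$j) ^ b) $ j) has_derivative
          (\<lambda>h. (\<chi> j. of_nat a * h$j * w$j ^ (a - 1) * cnj (w$j) ^ b
                     + of_nat b * cnj (h$j) * w$j ^ a * cnj (w$j) ^ (b - 1)) $ j)) (at w)"
    using has_derivative_mult[OF has_derivative_power[OF nth] has_derivative_power[OF cnj_nth]]
    by (simp add: algebra_simps)
qed

lemma wirtinger_power_cnj_power:
  fixes f :: "complex^'n \<Rightarrow> complex" and w :: "complex^'n"
  assumes "(f has_derivative (\<lambda>h. \<Sum>j\<in>UNIV. h$j * D j)) (at (\<chi> j. w$j ^ a * cnj (w$j) ^ b))"
  defines "g \<equiv> \<lambda>w. f (\<chi> j. w$j ^ a * cnj (w$j) ^ b)"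
  shows "wirt_d g w j = D j * (of_nat a * w$j ^ (a - 1) * cnj (w$j) ^ b)"
    and "wirt_dbar g w j = D j * (of_nat b * w$j ^ a * cnj (w$j) ^ (b - 1))"
proof -
  define \<alpha> where "\<alpha> = of_nat a * w$j ^ (a - 1) * cnj (w$j) ^ b"
  define \<beta> where "\<beta> = of_nat b * w$j ^ a * cnj (w$j) ^ (b - 1)"
  have fr: "frechet_derivative g (at w) = (\<lambda>h. \<Sum>k\<in>UNIV. (of_nat a * h$k * w$k ^ (a - 1) * cnj (w$k) ^ b
          + of_nat b * cnj (h$k) * w$k ^ a * cnj (w$k) ^ (b - 1)) * D k)"
    unfolding g_def
    using frechet_derivative_at[OF has_derivative_compose[OF has_derivative_power_cnj_power assms(1)]]
    by simp
  have "frechet_derivative g (at w) (axis j t)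
      = (\<Sum>k\<in>UNIV. if k = j then (t * \<alpha> + cnj t * \<beta>) * D j else 0)" for t
    unfolding fr by (intro sum.cong) (auto simp: axis_def \<alpha>_def \<beta>_def algebra_simps)
  then have "frechet_derivative g (at w) (axis j t) = (t * \<alpha> + cnj t * \<beta>) * D j" for t
    by simp
  then show "wirt_d g w j = D j * \<alpha>" "wirt_dbar g w j = D j * \<beta>"
    unfolding wirt_d_def wirt_dbar_def by (simp_all add: algebra_simps)
qed

lemma of_nat_mult_power_pred_shift:
  fixes x y :: "'a::comm_semiring_1"
  assumes "0 < a"
  shows "of_nat b * x ^ a * y ^ (b - 1) * y = of_nat b * x ^ (a - 1) * y ^ b * x"
proof (cases b)
  case (Suc b')
  moreover obtain a' where "a = Suc a'" using assms gr0_conv_Suc by blast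
  ultimately show ?thesis by (simp add: algebra_simps)
qed simp

lemma grad_power_cnj_power_proportional:
  fixes f :: "complex^'n \<Rightarrow> complex"
  assumes "(f has_derivative (\<lambda>h. \<Sum>j\<in>UNIV. h$j * D j)) (at (\<chi> j. w$j ^ a * cnj (w$j) ^ b))"
    and "0 < a"
  defines "g \<equiv> \<lambda>w. f (\<chi> j. w$j ^ a * cnj (w$j) ^ b)"
  defines "u \<equiv> vcnj (grad_d g w)" and "v \<equiv> grad_dbar g w"
  shows "v$j * cnj (w$j) = of_real (b / a) * (cnj (u$j) * w$j)"
    and "cmod (v$j) = b / a * cmod (u$j)"
proof -
  have u: "cnj (u$j) = D j * (of_nat a * w$j ^ (a - 1) * cnj (w$j) ^ b)"
    using wirtinger_power_cnj_power(1)[OF assms(1)] by (simp add: u_def g_def vcnj_def grad_d_def)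
  have v: "v$j = D j * (of_nat b * w$j ^ a * cnj (w$j) ^ (b - 1))"
    using wirtinger_power_cnj_power(2)[OF assms(1)] by (simp add: v_def g_def grad_dbar_def)
  show phase: "v$j * cnj (w$j) = of_real (b / a) * (cnj (u$j) * w$j)"
    unfolding u v using of_nat_mult_power_pred_shift[OF \<open>0 < a\<close>, of b "w$j" "cnj (w$j)"] \<open>0 < a\<close>
    by (simp add: field_simps)
  show "cmod (v$j) = b / a * cmod (u$j)"
  proof (cases "w$j = 0")
    case True
    have "cmod (u$j) = cmod (D j * (of_nat a * w$j ^ (a - 1) * cnj (w$j) ^ b))"
      by (metis u complex_mod_cnj)
    then show ?thesis using True \<open>0 < a\<close> by (cases b) (simp_all add: v power_0_left)
  next
    case False
    have "cmod (v$j) * cmod (w$j) = (b / a * cmod (u$j)) * cmod (w$j)"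
      using arg_cong[OF phase, of cmod] by (simp add: norm_mult norm_divide)
    then show ?thesis using False by (metis mult_right_cancel norm_eq_zero)
  qed
qed

theorem lemma21:
  fixes c :: "nat^'n \<Rightarrow> complex" and f g :: "complex^'n \<Rightarrow> complex"
    and U :: "(complex^'n) set" and a b :: nat and w :: "complex^'n"
  assumes "open U" and "0 \<in> U"
    and "\<forall>z\<in>U. ((\<lambda>\<nu>. c \<nu> * monom \<nu> z) has_sum f z) UNIV"
    and "convenient c" and "nondegenerate c"
    and "b < a"
    and "g = (\<lambda>w. f (\<chi> j. (w$j) ^ a * (cnj (w$j)) ^ b))"
    and "(\<chi> j. (w$j) ^ a * (cnj (w$j)) ^ b) \<in> U"
    and "w \<noteq> 0" and "g w \<noteq> 0"
  shows "(norm (proj_perp w (g w *s vcnj (grad_d g w))))\<^sup>2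
           - (norm (proj_perp w (cnj (g w) *s grad_dbar g w)))\<^sup>2 \<ge> 0
    \<and> ((norm (proj_perp w (g w *s vcnj (grad_d g w))))\<^sup>2
           - (norm (proj_perp w (cnj (g w) *s grad_dbar g w)))\<^sup>2 = 0
       \<longleftrightarrow> (\<exists>l1 l2. vcnj (grad_d g w) = l1 *s w \<and> grad_dbar g w = l2 *s w))
    \<and> ((norm (proj_perp w (g w *s vcnj (grad_d g w))))\<^sup>2
           - (norm (proj_perp w (cnj (g w) *s grad_dbar g w)))\<^sup>2 = 0
       \<longrightarrow> (\<exists>l. grad_theta g w = l *s reeb w))"
proof -
  define u v where "u = vcnj (grad_d g w)" and "v = grad_dbar g w"
  define k :: real where "k = b / a"
  have "0 \<le> k" "k < 1" using \<open>b < a\<close> by (simp_all add: k_def)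
  have proj_v: "(norm (proj_perp w v))\<^sup>2 = k\<^sup>2 * (norm (proj_perp w u))\<^sup>2"
    using power_series_has_derivative[OF assms(1,3,8)] \<open>b < a\<close> \<open>w \<noteq> 0\<close>
    by (intro norm_power2_proj_perp_proportional)
       (simp_all add: grad_power_cnj_power_proportional u_def v_def k_def assms(7))
  then have diff: "(norm (proj_perp w (g w *s u)))\<^sup>2 - (norm (proj_perp w (cnj (g w) *s v)))\<^sup>2
                   = (cmod (g w))\<^sup>2 * (1 - k\<^sup>2) * (norm (proj_perp w u))\<^sup>2"
    by (simp add: proj_perp_scale norm_power2_scale algebra_simps)
  have "0 < (cmod (g w))\<^sup>2 * (1 - k\<^sup>2)"
    using \<open>g w \<noteq> 0\<close> \<open>0 \<le> k\<close> \<open>k < 1\<close> by (simp add: power_less_one_iff abs_square_less_1)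
  then have "(cmod (g w))\<^sup>2 * (1 - k\<^sup>2) * (norm (proj_perp w u))\<^sup>2 = 0
               \<longleftrightarrow> proj_perp w u = 0 \<and> proj_perp w v = 0"
    using proj_v by auto
  then show ?thesis
    unfolding u_def[symmetric] v_def[symmetric] diff proj_perp_eq_0_iff[OF \<open>w \<noteq> 0\<close>]
    using \<open>0 < (cmod (g w))\<^sup>2 * (1 - k\<^sup>2)\<close> grad_theta_eq_scale_reeb[of w g, OF \<open>w \<noteq> 0\<close> \<open>g w \<noteq> 0\<close>]
    by (auto simp: u_def v_def)
qed

end
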